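(* Let $g(x)=\dfrac{1}{1-\cos(x)}$ for $x\in(0,2\pi)$. Then $g$ is completely monotonic on $(0,\pi]$ and absolutely monotonic on $[\pi,2\pi)$.
   Context: A function $f:I\to\mathbb{R}$ on an interval $I\subset\mathbb{R}$ is completely monotonic if it has derivatives of all orders and $(-1)^n f^{(n)}(x)\ge 0$ for all $n=0,1,2,\dots$ and $x\in I$; it is absolutely monotonic if it has derivatives of all orders and $f^{(n)}(x)\ge 0$ for all $n=0,1,2,\dots$ and $x\in I$. *)

theory Defs
  imports Complex_Main
begin

text \<open>Derivatives of all orders on an interval I are given by a sequence of functions D,
  with D 0 = f on I and D (Suc n) the derivative of D n at every point of I
  (taken within I, so one-sided at closed endpoints).\<close>

definition has_all_derivs_on :: "(real \<Rightarrow> real) \<Rightarrow> (nat \<Rightarrow> real \<Rightarrow> real) \<Rightarrow> real set \<Rightarrow> bool" where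
  "has_all_derivs_on f D I \<longleftrightarrow>
     (\<forall>x\<in>I. D 0 x = f x) \<and>
     (\<forall>n. \<forall>x\<in>I. (D n has_real_derivative D (Suc n) x) (at x within I))"

definition completely_monotonic_on :: "(real \<Rightarrow> real) \<Rightarrow> real set \<Rightarrow> bool" where
  "completely_monotonic_on f I \<longleftrightarrow>
     (\<exists>D. has_all_derivs_on f D I \<and> (\<forall>n. \<forall>x\<in>I. (-1::real)^n * D n x \<ge> 0))"

definition absolutely_monotonic_on :: "(real \<Rightarrow> real) \<Rightarrow> real set \<Rightarrow> bool" where
  "absolutely_monotonic_on f I \<longleftrightarrow>
     (\<exists>D. has_all_derivs_on f D I \<and> (\<forall>n. \<forall>x\<in>I. D n x \<ge> 0))"

end

theory Submission
  imports Defs "HOL-Computational_Algebra.Polynomial"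
begin

text \<open>With \<open>c(x) = cot (x/2)\<close> one has \<open>1/(1 - cos x) = (1 + c\<^sup>2)/2\<close> and
  \<open>c' = -(1 + c\<^sup>2)/2\<close>. Hence the \<open>n\<close>-th derivative of \<open>g\<close> is \<open>(-1)\<^sup>n P\<^sub>n(c)\<close>, where
  \<open>P\<^sub>0 = (1 + t\<^sup>2)/2\<close> and \<open>P\<^sub>n\<^sub>+\<^sub>1 = P\<^sub>n' (1 + t\<^sup>2)/2\<close> have nonnegative coefficients.
  Since \<open>c \<ge> 0\<close> on \<open>(0, \<pi>]\<close>, \<open>g\<close> is completely monotonic there; on \<open>[\<pi>, 2\<pi>)\<close> the same
  computation with \<open>-c \<ge> 0\<close>, which satisfies \<open>(-c)' = (1 + c\<^sup>2)/2\<close>, removes the signs.\<close>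

definition nonneg_coeffs :: "'a::linordered_idom poly \<Rightarrow> bool" where
  "nonneg_coeffs p \<longleftrightarrow> (\<forall>i. coeff p i \<ge> 0)"

lemma nonneg_coeffs_mult:
  "nonneg_coeffs p \<Longrightarrow> nonneg_coeffs q \<Longrightarrow> nonneg_coeffs (p * q)"
  unfolding nonneg_coeffs_def coeff_mult by (simp add: sum_nonneg)

lemma nonneg_coeffs_pderiv: "nonneg_coeffs p \<Longrightarrow> nonneg_coeffs (pderiv p)"
  unfolding nonneg_coeffs_def by (simp add: coeff_pderiv)

lemma poly_nonneg_if_nonneg_coeffs:
  "nonneg_coeffs p \<Longrightarrow> x \<ge> 0 \<Longrightarrow> poly p x \<ge> 0"
  unfolding nonneg_coeffs_def poly_altdef by (simp add: sum_nonneg)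

text \<open>Whenever \<open>\<phi>' = q \<circ> \<phi>\<close>, the \<open>n\<close>-th derivative of \<open>p \<circ> \<phi>\<close> is \<open>pderiv_along q p n \<circ> \<phi>\<close>.\<close>

fun pderiv_along :: "'a::{comm_semiring_1,semiring_no_zero_divisors} poly \<Rightarrow> 'a poly \<Rightarrow> nat \<Rightarrow> 'a poly" where
  "pderiv_along q p 0 = p"
| "pderiv_along q p (Suc n) = pderiv (pderiv_along q p n) * q"

lemma nonneg_coeffs_pderiv_along:
  "nonneg_coeffs p \<Longrightarrow> nonneg_coeffs q \<Longrightarrow> nonneg_coeffs (pderiv_along q p n)"
  by (induction n) (simp_all add: nonneg_coeffs_mult nonneg_coeffs_pderiv)

lemma has_all_derivs_on_poly_comp:
  fixes \<phi> :: "real \<Rightarrow> real"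
  assumes \<phi>_deriv: "\<And>x. x \<in> I \<Longrightarrow> (\<phi> has_real_derivative s * poly q (\<phi> x)) (at x within I)"
  shows "has_all_derivs_on (\<lambda>x. poly p (\<phi> x))
           (\<lambda>n x. s ^ n * poly (pderiv_along q p n) (\<phi> x)) I"
  unfolding has_all_derivs_on_def
proof (intro conjI allI ballI)
  fix n x assume "x \<in> I"
  have "((\<lambda>x. s ^ n * poly (pderiv_along q p n) (\<phi> x)) has_real_derivative
          s ^ n * (poly (pderiv (pderiv_along q p n)) (\<phi> x) * (s * poly q (\<phi> x)))) (at x within I)"
    by (intro DERIV_cmult DERIV_chain2[OF poly_DERIV] \<phi>_deriv \<open>x \<in> I\<close>)
  then show "((\<lambda>x. s ^ n * poly (pderiv_along q p n) (\<phi> x)) has_real_derivative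
          s ^ Suc n * poly (pderiv_along q p (Suc n)) (\<phi> x)) (at x within I)"
    by (simp add: algebra_simps)
qed simp

lemma completely_monotonic_on_poly_comp:
  fixes \<phi> :: "real \<Rightarrow> real"
  assumes "nonneg_coeffs p" "nonneg_coeffs q"
    and "\<And>x. x \<in> I \<Longrightarrow> (\<phi> has_real_derivative - poly q (\<phi> x)) (at x within I)"
    and "\<And>x. x \<in> I \<Longrightarrow> \<phi> x \<ge> 0"
    and "\<And>x. x \<in> I \<Longrightarrow> f x = poly p (\<phi> x)"
  shows "completely_monotonic_on f I"
proof -
  have "has_all_derivs_on (\<lambda>x. poly p (\<phi> x))
          (\<lambda>n x. (-1) ^ n * poly (pderiv_along q p n) (\<phi> x)) I"
    using assms(3) by (intro has_all_derivs_on_poly_comp) simp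
  then have "has_all_derivs_on f (\<lambda>n x. (-1) ^ n * poly (pderiv_along q p n) (\<phi> x)) I"
    using assms(5) by (simp add: has_all_derivs_on_def)
  moreover have "(-1) ^ n * ((-1) ^ n * poly (pderiv_along q p n) (\<phi> x)) \<ge> (0::real)"
    if "x \<in> I" for n x
  proof -
    have "poly (pderiv_along q p n) (\<phi> x) \<ge> 0"
      by (intro poly_nonneg_if_nonneg_coeffs nonneg_coeffs_pderiv_along assms(1,2,4) that)
    then show ?thesis
      by (simp flip: mult.assoc power_mult_distrib)
  qed
  ultimately show ?thesis
    unfolding completely_monotonic_on_def by blast
qed

lemma absolutely_monotonic_on_poly_comp:
  fixes \<phi> :: "real \<Rightarrow> real"
  assumes "nonneg_coeffs p" "nonneg_coeffs q"
    and "\<And>x. x \<in> I \<Longrightarrow> (\<phi> has_real_derivative poly q (\<phi> x)) (at x within I)"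
    and "\<And>x. x \<in> I \<Longrightarrow> \<phi> x \<ge> 0"
    and "\<And>x. x \<in> I \<Longrightarrow> f x = poly p (\<phi> x)"
  shows "absolutely_monotonic_on f I"
proof -
  have "has_all_derivs_on (\<lambda>x. poly p (\<phi> x))
          (\<lambda>n x. 1 ^ n * poly (pderiv_along q p n) (\<phi> x)) I"
    using assms(3) by (intro has_all_derivs_on_poly_comp) simp
  then have "has_all_derivs_on f (\<lambda>n x. poly (pderiv_along q p n) (\<phi> x)) I"
    using assms(5) by (simp add: has_all_derivs_on_def)
  moreover have "poly (pderiv_along q p n) (\<phi> x) \<ge> 0" if "x \<in> I" for n x
    by (intro poly_nonneg_if_nonneg_coeffs nonneg_coeffs_pderiv_along assms(1,2,4) that)
  ultimately show ?thesis
    unfolding absolutely_monotonic_on_def by blast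
qed

definition half_one_plus_sq :: "real poly" where
  "half_one_plus_sq = [:1/2, 0, 1/2:]"

lemma nonneg_coeffs_half_one_plus_sq: "nonneg_coeffs half_one_plus_sq"
  by (auto simp: nonneg_coeffs_def half_one_plus_sq_def coeff_pCons split: nat.split)

lemma poly_half_one_plus_sq: "poly half_one_plus_sq t = (1 + t\<^sup>2) / 2"
  by (simp add: half_one_plus_sq_def power2_eq_square field_simps)

lemma poly_half_one_plus_sq_minus: "poly half_one_plus_sq (- t) = poly half_one_plus_sq t"
  by (simp add: poly_half_one_plus_sq)

lemma poly_half_one_plus_sq_cot:
  "sin y \<noteq> 0 \<Longrightarrow> poly half_one_plus_sq (cot y) = 1 / (2 * (sin y)\<^sup>2)"
  using sin_cos_squared_add[of y] by (simp add: poly_half_one_plus_sq cot_def field_simps)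

lemma one_div_one_minus_cos_eq_cot_half:
  assumes "sin (x/2) \<noteq> 0"
  shows "1 / (1 - cos x) = poly half_one_plus_sq (cot (x/2))"
proof -
  have "1 - cos x = 2 * (sin (x/2))\<^sup>2"
    using cos_double_sin[of "x/2"] by simp
  then show ?thesis
    by (simp only: poly_half_one_plus_sq_cot[OF assms])
qed

lemma DERIV_cot_half:
  assumes "sin (x/2) \<noteq> 0"
  shows "((\<lambda>x. cot (x/2)) has_real_derivative - poly half_one_plus_sq (cot (x/2))) (at x)"
proof -
  have "((\<lambda>x. cot (x/2)) has_real_derivative - inverse ((sin (x/2))\<^sup>2) * (1/2)) (at x)"
    by (rule DERIV_chain2[where f = cot and g = "\<lambda>x. x/2" and x = x, OF DERIV_cot[OF assms]])
      (rule derivative_eq_intros refl | simp)+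
  then show ?thesis
    unfolding poly_half_one_plus_sq_cot[OF assms] by (simp add: inverse_eq_divide mult.commute)
qed

lemma DERIV_minus_cot_half:
  assumes "sin (x/2) \<noteq> 0"
  shows "((\<lambda>x. - cot (x/2)) has_real_derivative poly half_one_plus_sq (cot (x/2))) (at x)"
  using DERIV_minus[OF DERIV_cot_half[OF assms]] by simp

lemma sin_half_pos: "0 < x \<Longrightarrow> x < 2 * pi \<Longrightarrow> sin (x/2) > 0"
  by (intro sin_gt_zero) auto

lemma cot_half_nonneg: "0 < x \<Longrightarrow> x \<le> pi \<Longrightarrow> cot (x/2) \<ge> 0"
  using sin_half_pos[of x] cos_ge_zero[of "x/2"] by (simp add: cot_def)

lemma cot_half_nonpos: "pi \<le> x \<Longrightarrow> x < 2 * pi \<Longrightarrow> cot (x/2) \<le> 0"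
  using sin_half_pos[of x] cos_ge_zero[of "pi - x/2"] pi_gt_zero
  by (simp add: cot_def divide_nonpos_pos)

theorem theorem1:
  fixes g :: "real \<Rightarrow> real"
  defines "g \<equiv> (\<lambda>x. 1 / (1 - cos x))"
  shows "completely_monotonic_on g {0<..pi} \<and> absolutely_monotonic_on g {pi..<2*pi}"
proof
  show "completely_monotonic_on g {0<..pi}"
  proof (rule completely_monotonic_on_poly_comp[where \<phi> = "\<lambda>x. cot (x/2)"])
    fix x assume "x \<in> {0<..pi}"
    then have x: "0 < x" "x \<le> pi" and "sin (x/2) \<noteq> 0"
      using sin_half_pos[of x] by auto
    then show "((\<lambda>x. cot (x/2)) has_real_derivative - poly half_one_plus_sq (cot (x/2)))
        (at x within {0<..pi})"
      and "g x = poly half_one_plus_sq (cot (x/2))"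
      by (simp_all add: DERIV_cot_half has_field_derivative_at_within
          g_def one_div_one_minus_cos_eq_cot_half)
    show "cot (x/2) \<ge> 0"
      using x by (rule cot_half_nonneg)
  qed (rule nonneg_coeffs_half_one_plus_sq)+
  show "absolutely_monotonic_on g {pi..<2*pi}"
  proof (rule absolutely_monotonic_on_poly_comp[where \<phi> = "\<lambda>x. - cot (x/2)"])
    fix x assume "x \<in> {pi..<2*pi}"
    then have x: "pi \<le> x" "x < 2 * pi" and "sin (x/2) \<noteq> 0"
      using sin_half_pos[of x] pi_gt_zero by auto
    then show "((\<lambda>x. - cot (x/2)) has_real_derivative poly half_one_plus_sq (- cot (x/2)))
        (at x within {pi..<2*pi})"
      and "g x = poly half_one_plus_sq (- cot (x/2))"
      by (simp_all add: DERIV_minus_cot_half has_field_derivative_at_within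
          g_def one_div_one_minus_cos_eq_cot_half poly_half_one_plus_sq_minus)
    show "- cot (x/2) \<ge> 0"
      using cot_half_nonpos[OF x] by simp
  qed (rule nonneg_coeffs_half_one_plus_sq)+
qed

end
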